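(* Let $\ell=\ell_{log}$ and let $\hat w$ be the hard-margin SVM solution. Suppose the overparameterization, logistic-setup, and active-margin assumptions (see context) hold. Then for every gradient descent iterate, $-\alpha_t\langle\hat w,\nabla_w\mathcal R_t\rangle\ge0$, and if $\alpha_t>0$, $$-\langle\hat w,\nabla_w\mathcal R_t\rangle\ge\frac{\lambda_{\min}}{8}\cdot\frac{\alpha_te^{-\alpha_t}}{\|w_t\|_\Sigma}(\rho_t^\perp)^2.$$
   Context: Data: $n$ samples $(x_i,y_i)$, $x_i\in\mathbb R^d$, $y_i\in\{1,-1\}$; $X=[x_1,\dots,x_n]$, $\tilde X=X\,\mathrm{diag}(y)$, $\Sigma=\frac1n\tilde X\tilde X^T$, $\|a\|_\Sigma^2=a^T\Sigma a$, $\langle a,b\rangle_\Sigma=a^T\Sigma b$; unsubscripted norms/inner products Euclidean. Risk $\mathcal R(w,\alpha)=\frac1n\sum_i\ell(\alpha y_i\langle x_i,w\rangle/\|w\|_\Sigma)$ with $\ell_{log}(z)=\log(1+e^{-z})$. Gradient descent with $\eta,\eta_\alpha>0$: $w_{t+1}=w_t-\eta\nabla_w\mathcal R(w_t,\alpha_t)$, $\alpha_{t+1}=\alpha_t-\eta_\alpha\partial_\alpha\mathcal R(w_t,\alpha_t)$, $\alpha_0>0$; $\mathcal R_t=\mathcal R(w_t,\alpha_t)$. Assumptions: (overparameterization) $n<d$ and $\mathrm{rank}X=n$; (logistic setup) the data are linearly separable and $w_0\in\mathrm{span}\{x_1,\dots,x_n\}\setminus\{0\}$; SVM solution $\hat w:=\arg\min\{\|w\|: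 y_i\langle x_i,w\rangle\ge1\ \forall i\}$, margin $\gamma:=1/\|\hat w\|$; (active margin) $y_i\langle x_i,\hat w\rangle=1$ for all $i\in[n]$. With $\mathcal X:=\mathrm{span}\{x_1,\dots,x_n\}\setminus\{0\}$, $\lambda_{\max}:=\sup_{w\in\mathcal X}\|w\|_\Sigma^2/\|w\|^2$, $\lambda_{\min}:=\inf_{w\in\mathcal X}\|w\|_\Sigma^2/\|w\|^2$. $\rho_t:=\langle\hat w,w_t\rangle/\|w_t\|$, $\rho_t^\perp:=\|\hat w-\rho_tw_t/\|w_t\|\|$. *)

theory Defs
  imports "HOL-Analysis.Analysis"
begin

definition data_matrix :: "('n::finite \<Rightarrow> real^'d::finite) \<Rightarrow> real^'n^'d" where
  "data_matrix x = (\<chi> j i. x i $ j)"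

definition labeled_matrix :: "('n::finite \<Rightarrow> real^'d::finite) \<Rightarrow> ('n \<Rightarrow> real) \<Rightarrow> real^'n^'d" where
  "labeled_matrix x y = data_matrix x ** (\<chi> i j. if i = j then y i else 0)"

definition Sigma_mat :: "('n::finite \<Rightarrow> real^'d::finite) \<Rightarrow> ('n \<Rightarrow> real) \<Rightarrow> real^'d^'d" where
  "Sigma_mat x y = (1 / real CARD('n)) *\<^sub>R (labeled_matrix x y ** transpose (labeled_matrix x y))"

definition signorm :: "('n::finite \<Rightarrow> real^'d::finite) \<Rightarrow> ('n \<Rightarrow> real) \<Rightarrow> real^'d \<Rightarrow> real" where
  "signorm x y a = sqrt (a \<bullet> (Sigma_mat x y *v a))"

definition ell_log :: "real \<Rightarrow> real" where
  "ell_log z = ln (1 + exp (- z))"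

definition risk :: "('n::finite \<Rightarrow> real^'d::finite) \<Rightarrow> ('n \<Rightarrow> real) \<Rightarrow> real^'d \<Rightarrow> real \<Rightarrow> real" where
  "risk x y w \<alpha> = (1 / real CARD('n)) *
     (\<Sum>i\<in>UNIV. ell_log (\<alpha> * y i * (x i \<bullet> w) / signorm x y w))"

definition grad_w :: "('n::finite \<Rightarrow> real^'d::finite) \<Rightarrow> ('n \<Rightarrow> real) \<Rightarrow> real^'d \<Rightarrow> real \<Rightarrow> real^'d" where
  "grad_w x y w \<alpha> = (THE g. ((\<lambda>v. risk x y v \<alpha>) has_derivative (\<lambda>h. g \<bullet> h)) (at w))"

definition deriv_alpha :: "('n::finite \<Rightarrow> real^'d::finite) \<Rightarrow> ('n \<Rightarrow> real) \<Rightarrow> real^'d \<Rightarrow> real \<Rightarrow> real" where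
  "deriv_alpha x y w \<alpha> = deriv (\<lambda>a. risk x y w a) \<alpha>"

definition is_svm_solution :: "('n::finite \<Rightarrow> real^'d::finite) \<Rightarrow> ('n \<Rightarrow> real) \<Rightarrow> real^'d \<Rightarrow> bool" where
  "is_svm_solution x y wh \<longleftrightarrow>
     (\<forall>i. y i * (x i \<bullet> wh) \<ge> 1) \<and>
     (\<forall>w. (\<forall>i. y i * (x i \<bullet> w) \<ge> 1) \<longrightarrow> norm wh \<le> norm w)"

definition lambda_min :: "('n::finite \<Rightarrow> real^'d::finite) \<Rightarrow> ('n \<Rightarrow> real) \<Rightarrow> real" where
  "lambda_min x y = Inf ((\<lambda>w. (signorm x y w)\<^sup>2 / (norm w)\<^sup>2) ` (span (range x) - {0}))"

definition lambda_max :: "('n::finite \<Rightarrow> real^'d::finite) \<Rightarrow> ('n \<Rightarrow> real) \<Rightarrow> real" where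
  "lambda_max x y = Sup ((\<lambda>w. (signorm x y w)\<^sup>2 / (norm w)\<^sup>2) ` (span (range x) - {0}))"

definition rho :: "real^'d::finite \<Rightarrow> real^'d \<Rightarrow> real" where
  "rho wh w = (wh \<bullet> w) / norm w"

definition rho_perp :: "real^'d::finite \<Rightarrow> real^'d \<Rightarrow> real" where
  "rho_perp wh w = norm (wh - (rho wh w / norm w) *\<^sub>R w)"

end

theory Submission
  imports Defs
begin

(* Write z i = y i x i for the labeled samples.  The risk depends on w only through the
   normalized margins u i = <z i, w> / ||w||_Sigma, which satisfy sum_i (u i)^2 = n; hence its
   gradient is orthogonal to w and lies in the span of the data, and the iterates stay in
   span {x i} - {0}.  Since <z i, w_hat> = 1 for all i, the derivative along w_hat is
     - <w_hat, grad_w R> = alpha / (n ||w||_Sigma) * sum_i sigma (alpha u i) (1 - m u i),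
   where sigma = - ell_log' and m is the mean margin.  The weights 1 - m u i sum to n (1 - m^2)
   and are orthogonal to u, so for alpha > 0 the sum is at least n exp (- alpha) / 8 (1 - m^2):
   by Chebyshev's sum inequality if m >= 0, and by comparing sigma (alpha u) with a line that
   changes sign together with 1 - m u if m < 0.  For alpha < 0 the symmetry
   (alpha, u) -> (- alpha, - u) gives nonnegativity.  Finally v = w_hat - (m / ||w||_Sigma) w
   satisfies <z i, v> = 1 - m u i, so
     lambda_min rho_perp^2 <= lambda_min ||v||^2 <= ||v||_Sigma^2 = 1 - m^2. *)

section \<open>The logistic weight\<close>

lemma mult_exp_minus_le: "x * exp (- x) \<le> exp (- 1 :: real)"
  using exp_ge_add_one_self[of "x - 1"] mult_right_mono[of x "exp (x - 1)" "exp (- x)"]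
  by (simp add: exp_add[symmetric])

lemma exp_minus_one_le: "exp (- 1 :: real) \<le> 3 / 8"
  using e_approx_32 by (simp add: exp_minus field_simps abs_if split: if_splits)

definition logistic_weight :: "real \<Rightarrow> real" where
  "logistic_weight z = 1 / (1 + exp z)"

lemma logistic_weight_pos: "0 < logistic_weight z"
  unfolding logistic_weight_def by (simp add: add_pos_pos)

lemma logistic_weight_le_1: "logistic_weight z \<le> 1"
  unfolding logistic_weight_def by (simp add: add_pos_pos)

lemma logistic_weight_antimono: "u \<le> v \<Longrightarrow> logistic_weight v \<le> logistic_weight u"
  unfolding logistic_weight_def by (intro divide_left_mono) (auto simp: add_pos_pos)

lemma logistic_weight_0: "logistic_weight 0 = 1 / 2"
  by (simp add: logistic_weight_def)

lemma logistic_weight_ge_half: "z \<le> 0 \<Longrightarrow> 1 / 2 \<le> logistic_weight z"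
  using logistic_weight_antimono[of z 0] by (simp add: logistic_weight_0)

lemma logistic_weight_minus: "logistic_weight (- z) = 1 - logistic_weight z"
proof -
  have "1 + exp z \<noteq> 0"
    by (smt (verit) exp_gt_zero)
  then show ?thesis
    unfolding logistic_weight_def exp_minus by (simp add: field_simps)
qed

lemma logistic_weight_ge_exp: "0 \<le> z \<Longrightarrow> exp (- z) / 2 \<le> logistic_weight z"
  unfolding logistic_weight_def exp_minus by (simp add: field_simps add_pos_pos)

lemma DERIV_ell_log: "DERIV ell_log z :> - logistic_weight z"
proof -
  have "DERIV ell_log z :> 1 / (1 + exp (- z)) * (exp (- z) * - 1)"
    unfolding ell_log_def[abs_def] by (auto intro!: derivative_eq_intros simp: add_pos_pos)
  also have "1 / (1 + exp (- z)) * (exp (- z) * - 1) = - logistic_weight z"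
    unfolding logistic_weight_def exp_minus by (simp add: field_simps add_pos_pos)
  finally show ?thesis .
qed

lemma convex_on_logistic_weight: "convex_on {0..} logistic_weight"
proof (rule convex_on_realI[where f' = "\<lambda>z. - exp z / (1 + exp z)\<^sup>2"])
  fix z :: real
  have "1 + exp z \<noteq> 0"
    by (smt (verit) exp_gt_zero)
  then show "(logistic_weight has_real_derivative - exp z / (1 + exp z)\<^sup>2) (at z)"
    unfolding logistic_weight_def[abs_def]
    by (auto intro!: derivative_eq_intros simp: power2_eq_square)
next
  fix u v :: real
  assume "u \<in> {0..}" "v \<in> {0..}" "u \<le> v"
  then have E: "1 \<le> exp u" "exp u \<le> exp v" "1 \<le> exp u * exp v"
    by (auto simp: exp_add[symmetric])
  have "exp u * (1 + exp v)\<^sup>2 - exp v * (1 + exp u)\<^sup>2 = (exp v - exp u) * (exp u * exp v - 1)"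
    by (simp add: power2_eq_square algebra_simps)
  also have "\<dots> \<ge> 0"
    using E by (intro mult_nonneg_nonneg) auto
  moreover have "0 < 1 + exp u" "0 < 1 + exp v"
    by (simp_all add: add_pos_pos)
  ultimately have "exp v / (1 + exp v)\<^sup>2 \<le> exp u / (1 + exp u)\<^sup>2"
    by (simp add: divide_simps)
  then show "- exp u / (1 + exp u)\<^sup>2 \<le> - exp v / (1 + exp v)\<^sup>2"
    by simp
qed simp

lemma logistic_weight_ge_chord:
  assumes "z \<le> 0" "0 \<le> \<theta>" "\<theta> \<le> 1"
  shows "(1 - \<theta>) / 2 + \<theta> * logistic_weight z \<le> logistic_weight (\<theta> * z)"
proof -
  have "logistic_weight ((1 - \<theta>) *\<^sub>R 0 + \<theta> *\<^sub>R (- z))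
      \<le> (1 - \<theta>) * logistic_weight 0 + \<theta> * logistic_weight (- z)"
    using assms by (intro convex_onD[OF convex_on_logistic_weight]) auto
  then have "1 - logistic_weight (\<theta> * z) \<le> (1 - \<theta>) / 2 + \<theta> * (1 - logistic_weight z)"
    by (simp add: logistic_weight_0 logistic_weight_minus[symmetric])
  then show ?thesis
    by (simp add: field_simps)
qed

lemma logistic_weight_diff_le:
  assumes "u \<le> t"
  shows "logistic_weight u - logistic_weight t \<le> exp t * (t - u)"
proof -
  have "1 + exp u \<noteq> 0" "1 + exp t \<noteq> 0"
    by (smt (verit) exp_gt_zero)+
  then have "logistic_weight u - logistic_weight t = (exp t - exp u) / ((1 + exp u) * (1 + exp t))"
    unfolding logistic_weight_def by (simp add: field_simps)
  also have "\<dots> \<le> (exp t - exp u) / 1"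
    using assms by (intro divide_left_mono) (auto simp: algebra_simps add_pos_pos)
  also have "\<dots> \<le> exp t * (t - u)"
    using exp_ge_add_one_self[of "u - t"] mult_left_mono[of "1 + (u - t)" "exp (u - t)" "exp t"]
    by (simp add: algebra_simps exp_diff)
  finally show ?thesis .
qed

lemma logistic_weight_ge_quadratic:
  assumes "0 < a"
  shows "exp (- a) / 2 * (1 - a * (u\<^sup>2 - 1) / 2) \<le> logistic_weight (a * u)"
proof -
  define v where "v = (1 + u\<^sup>2) / 2"
  have "u \<le> v"
    using sum_squares_bound[of u 1] by (simp add: v_def power2_eq_square)
  have "exp (- a) * (1 - a * (v - 1)) \<le> exp (- a) * exp (- (a * (v - 1)))"
    using exp_ge_add_one_self[of "- (a * (v - 1))"] by (intro mult_left_mono) auto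
  also have "\<dots> = exp (- (a * v))"
    by (simp add: exp_add[symmetric] algebra_simps)
  also have "exp (- (a * v)) / 2 \<le> logistic_weight (a * v)"
    using assms by (intro logistic_weight_ge_exp) (simp add: v_def)
  also have "\<dots> \<le> logistic_weight (a * u)"
    using assms \<open>u \<le> v\<close> by (intro logistic_weight_antimono) simp
  finally show ?thesis
    by (simp add: v_def field_simps)
qed

lemma logistic_weight_opposite:
  assumes "0 \<le> a"
  shows "(logistic_weight (a * u) - logistic_weight (a * v)) * (u - v) \<le> 0"
proof (cases "u \<le> v")
  case True
  then have "logistic_weight (a * v) \<le> logistic_weight (a * u)"
    using assms by (intro logistic_weight_antimono mult_left_mono)
  with True show ?thesis
    by (simp add: mult_nonneg_nonpos)
next
  case False
  then have "logistic_weight (a * u) \<le> logistic_weight (a * v)"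
    using assms by (intro logistic_weight_antimono mult_left_mono) simp_all
  with False show ?thesis
    by (simp add: mult_nonpos_nonneg)
qed

lemma logistic_line_slope_ge:
  assumes "0 < a" and "0 < b"
  shows "3 / 8 * b \<le> b * (logistic_weight (- a / b) - exp (- a) / 8)"
proof -
  have "1 / 2 \<le> logistic_weight (- a / b)"
    using assms by (intro logistic_weight_ge_half) simp
  moreover have "exp (- a) \<le> 1"
    using assms by simp
  ultimately have "3 / 8 \<le> logistic_weight (- a / b) - exp (- a) / 8"
    by linarith
  then show ?thesis
    using \<open>0 < b\<close> by (simp add: mult_left_mono mult.commute)
qed

lemma logistic_weight_ge_line_nonneg:
  assumes "0 < a" and "0 \<le> c" and "c \<le> exp (- a) / 2" and "c \<le> s" and "0 \<le> u"
  shows "c - s * u \<le> logistic_weight (a * u)"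
proof (cases "u \<le> 1")
  case True
  have "0 \<le> s * u"
    using assms by simp
  then have "c - s * u \<le> exp (- a) / 2"
    using assms by linarith
  also have "\<dots> \<le> logistic_weight a"
    using \<open>0 < a\<close> by (intro logistic_weight_ge_exp) simp
  also have "\<dots> \<le> logistic_weight (a * u)"
    using \<open>0 < a\<close> True by (intro logistic_weight_antimono) simp
  finally show ?thesis .
next
  case False
  then have "s * 1 \<le> s * u"
    using assms by (intro mult_left_mono) simp_all
  then have "c - s * u \<le> 0"
    using \<open>c \<le> s\<close> by simp
  then show ?thesis
    using logistic_weight_pos[of "a * u"] by linarith
qed

lemma logistic_weight_ge_line:
  fixes a b u :: real
  defines "c \<equiv> exp (- a) / 8"
  defines "s \<equiv> b * (logistic_weight (- a / b) - c)"
  assumes "0 < a" and b: "exp (- a) / 3 \<le> b" and "- 1 / b \<le> u"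
  shows "c - s * u \<le> logistic_weight (a * u)"
proof -
  have "0 < b"
    using b exp_gt_zero[of "- a"] by linarith
  have "0 < c" "c \<le> 1 / 8"
    using \<open>0 < a\<close> by (simp_all add: c_def)
  have "c \<le> s"
    using logistic_line_slope_ge[OF \<open>0 < a\<close> \<open>0 < b\<close>] b by (simp add: s_def c_def)
  show ?thesis
  proof (cases "0 \<le> u")
    case True
    then show ?thesis
      using \<open>0 < a\<close> \<open>0 < c\<close> \<open>c \<le> s\<close> by (intro logistic_weight_ge_line_nonneg) (simp_all add: c_def)
  next
    case False
    define \<theta> where "\<theta> = - b * u"
    have "0 \<le> \<theta>" "\<theta> \<le> 1"
      using False \<open>- 1 / b \<le> u\<close> \<open>0 < b\<close>
      by (simp_all add: \<theta>_def field_simps mult_nonneg_nonpos)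
    have "c - s * u = (1 - \<theta>) * c + \<theta> * logistic_weight (- a / b)"
      by (simp add: s_def \<theta>_def algebra_simps)
    also have "\<dots> \<le> (1 - \<theta>) / 2 + \<theta> * logistic_weight (- a / b)"
      using \<open>\<theta> \<le> 1\<close> \<open>c \<le> 1 / 8\<close> mult_left_mono[of c "1 / 2" "1 - \<theta>"] by simp
    also have "\<dots> \<le> logistic_weight (\<theta> * (- a / b))"
      using \<open>0 < a\<close> \<open>0 < b\<close> \<open>0 \<le> \<theta>\<close> \<open>\<theta> \<le> 1\<close> by (intro logistic_weight_ge_chord) simp_all
    also have "\<theta> * (- a / b) = a * u"
      using \<open>0 < b\<close> by (simp add: \<theta>_def)
    finally show ?thesis .
  qed
qed

lemma logistic_weight_le_line:
  fixes a b u :: real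
  defines "c \<equiv> exp (- a) / 8"
  defines "s \<equiv> b * (logistic_weight (- a / b) - c)"
  assumes "0 < a" and b: "exp (- a) / 3 \<le> b" and "u \<le> - 1 / b"
  shows "logistic_weight (a * u) \<le> c - s * u"
proof -
  define t where "t = - 1 / b"
  have "0 < b"
    using b exp_gt_zero[of "- a"] by linarith
  have "a * exp (a * t) = b * ((a / b) * exp (- (a / b)))"
    using \<open>0 < b\<close> by (simp add: t_def)
  also have "\<dots> \<le> b * exp (- 1)"
    using mult_exp_minus_le[of "a / b"] \<open>0 < b\<close> by (intro mult_left_mono) simp_all
  also have "\<dots> \<le> 3 / 8 * b"
    using exp_minus_one_le \<open>0 < b\<close> by simp
  also have "\<dots> \<le> s"
    using logistic_line_slope_ge[OF \<open>0 < a\<close> \<open>0 < b\<close>] by (simp add: s_def c_def)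
  finally have "a * exp (a * t) \<le> s" .
  have "logistic_weight (a * u) - logistic_weight (a * t) \<le> exp (a * t) * (a * t - a * u)"
    using mult_left_mono[OF \<open>u \<le> - 1 / b\<close>, of a] \<open>0 < a\<close>
    by (intro logistic_weight_diff_le) (simp add: t_def)
  also have "\<dots> = (a * exp (a * t)) * (t - u)"
    by (simp add: algebra_simps)
  also have "\<dots> \<le> s * (t - u)"
    using \<open>a * exp (a * t) \<le> s\<close> \<open>u \<le> - 1 / b\<close> by (intro mult_right_mono) (simp_all add: t_def)
  finally have "logistic_weight (a * u) \<le> logistic_weight (a * t) + s * (t - u)"
    by simp
  also have "logistic_weight (a * t) = c - s * t"
    using \<open>0 < b\<close> by (simp add: s_def t_def)
  finally show ?thesis
    by (simp add: algebra_simps)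
qed

lemma logistic_weight_line_mult_le:
  fixes a b u :: real
  defines "c \<equiv> exp (- a) / 8"
  defines "s \<equiv> b * (logistic_weight (- a / b) - c)"
  assumes "0 < a" and b: "exp (- a) / 3 \<le> b"
  shows "(c - s * u) * (1 + b * u) \<le> logistic_weight (a * u) * (1 + b * u)"
proof -
  have "0 < b"
    using b exp_gt_zero[of "- a"] by linarith
  show ?thesis
  proof (cases "- 1 / b \<le> u")
    case True
    then have "0 \<le> 1 + b * u"
      using \<open>0 < b\<close> by (simp add: field_simps)
    moreover have "c - s * u \<le> logistic_weight (a * u)"
      unfolding c_def s_def using \<open>0 < a\<close> b True by (rule logistic_weight_ge_line)
    ultimately show ?thesis
      by (simp add: mult_right_mono)
  next
    case False
    then have "1 + b * u \<le> 0"
      using \<open>0 < b\<close> by (simp add: field_simps)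
    moreover have "logistic_weight (a * u) \<le> c - s * u"
      unfolding c_def s_def using \<open>0 < a\<close> b False by (intro logistic_weight_le_line) simp_all
    ultimately show ?thesis
      by (simp add: mult_right_mono_neg)
  qed
qed

section \<open>Sums weighted by centered margins\<close>

lemma Chebyshev_sum_upper_set:
  fixes f g :: "'a \<Rightarrow> real"
  assumes "\<And>i j. i \<in> I \<Longrightarrow> j \<in> I \<Longrightarrow> (f i - f j) * (g i - g j) \<le> 0"
  shows "card I * (\<Sum>i\<in>I. f i * g i) \<le> (\<Sum>i\<in>I. f i) * (\<Sum>i\<in>I. g i)"
proof -
  have "2 * (card I * (\<Sum>i\<in>I. f i * g i) - (\<Sum>i\<in>I. f i) * (\<Sum>i\<in>I. g i))
      = (\<Sum>i\<in>I. \<Sum>j\<in>I. (f i - f j) * (g i - g j))"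
    by (simp add: algebra_simps sum_subtractf sum.distrib sum_distrib_left sum_distrib_right
        sum.swap[of "\<lambda>i j. f i * g j"])
  also have "\<dots> \<le> 0"
    using assms by (intro sum_nonpos) auto
  finally show ?thesis
    by simp
qed

lemma sum_affine_mult_centered:
  fixes u :: "'a \<Rightarrow> real" and c s m :: real
  assumes "(\<Sum>i\<in>I. (u i)\<^sup>2) = card I"
  defines "m \<equiv> (\<Sum>i\<in>I. u i) / card I"
  shows "(\<Sum>i\<in>I. (c - s * u i) * (1 - u i * m)) = card I * c * (1 - m\<^sup>2)"
proof -
  have sum_u: "(\<Sum>i\<in>I. u i) = card I * m"
    by (cases "finite I \<and> I \<noteq> {}") (auto simp: m_def)
  have "(\<Sum>i\<in>I. (c - s * u i) * (1 - u i * m)) = (\<Sum>i\<in>I. c - (s + c * m) * u i + s * m * (u i)\<^sup>2)"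
    by (simp add: algebra_simps power2_eq_square)
  also have "\<dots> = card I * c - (s + c * m) * (\<Sum>i\<in>I. u i) + s * m * (\<Sum>i\<in>I. (u i)\<^sup>2)"
    by (simp add: sum.distrib sum_subtractf sum_distrib_left)
  also have "\<dots> = card I * c * (1 - m\<^sup>2)"
    using assms(1) sum_u by (simp add: algebra_simps power2_eq_square)
  finally show ?thesis .
qed

lemma mean_sq_le_1:
  fixes u :: "'a \<Rightarrow> real"
  assumes "(\<Sum>i\<in>I. (u i)\<^sup>2) = card I"
  shows "((\<Sum>i\<in>I. u i) / card I)\<^sup>2 \<le> 1"
  using sum_squared_le_sum_of_squares[of u I] assms
  by (cases "card I = 0") (simp_all add: power_divide power2_eq_square divide_le_eq)

lemma sum_centered_ge_Chebyshev:
  fixes I :: "'a set" and u f :: "'a \<Rightarrow> real" and m :: real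
  defines "m \<equiv> (\<Sum>i\<in>I. u i) / card I"
  assumes "0 \<le> m"
    and opposite: "\<And>i j. i \<in> I \<Longrightarrow> j \<in> I \<Longrightarrow> (f i - f j) * (u i - u j) \<le> 0"
  shows "(\<Sum>i\<in>I. f i) * (1 - m\<^sup>2) \<le> (\<Sum>i\<in>I. f i * (1 - u i * m))"
proof (cases "finite I \<and> I \<noteq> {}")
  case True
  then have N: "0 < real (card I)"
    by (simp add: card_gt_0_iff)
  have "card I * (\<Sum>i\<in>I. f i * u i) \<le> (\<Sum>i\<in>I. f i) * (card I * m)"
    using Chebyshev_sum_upper_set[of I f u] opposite N by (simp add: m_def)
  then have "(\<Sum>i\<in>I. f i * u i) \<le> (\<Sum>i\<in>I. f i) * m"
    using N by (simp add: algebra_simps)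
  then have "m * (\<Sum>i\<in>I. f i * u i) \<le> m * ((\<Sum>i\<in>I. f i) * m)"
    using \<open>0 \<le> m\<close> by (rule mult_left_mono)
  then show ?thesis
    by (simp add: algebra_simps power2_eq_square sum_subtractf sum_distrib_left)
qed auto

lemma sum_mult_affine_ge:
  fixes u f :: "'a \<Rightarrow> real" and b :: real
  assumes "(\<Sum>i\<in>I. (u i)\<^sup>2) = card I" and "0 \<le> b"
    and "\<And>i. i \<in> I \<Longrightarrow> 0 \<le> f i \<and> f i \<le> 1"
  shows "(\<Sum>i\<in>I. f i) - b * card I \<le> (\<Sum>i\<in>I. f i * (1 + b * u i))"
proof -
  have "f i - b * (1 + (u i)\<^sup>2) / 2 \<le> f i * (1 + b * u i)" if "i \<in> I" for i
  proof -
    have "\<bar>f i * u i\<bar> \<le> \<bar>u i\<bar>"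
      using assms(3)[OF that] by (simp add: abs_mult mult_left_le_one_le)
    also have "\<dots> \<le> (1 + (u i)\<^sup>2) / 2"
      using sum_squares_bound[of "\<bar>u i\<bar>" 1] by simp
    finally have "- ((1 + (u i)\<^sup>2) / 2) \<le> f i * u i"
      using abs_ge_minus_self[of "f i * u i"] by linarith
    then have "b * - ((1 + (u i)\<^sup>2) / 2) \<le> b * (f i * u i)"
      using \<open>0 \<le> b\<close> by (rule mult_left_mono)
    then show ?thesis
      by (simp add: algebra_simps)
  qed
  then have "(\<Sum>i\<in>I. f i - b * (1 + (u i)\<^sup>2) / 2) \<le> (\<Sum>i\<in>I. f i * (1 + b * u i))"
    by (rule sum_mono)
  moreover have "(\<Sum>i\<in>I. f i - b * (1 + (u i)\<^sup>2) / 2) = (\<Sum>i\<in>I. f i) - b * card I"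
    using assms(1)
    by (simp add: sum_subtractf sum.distrib flip: sum_divide_distrib sum_distrib_left)
  ultimately show ?thesis
    by simp
qed

lemma logistic_weight_sum_ge:
  fixes u :: "'a \<Rightarrow> real"
  assumes "0 < a" and "(\<Sum>i\<in>I. (u i)\<^sup>2) = card I"
  shows "card I * (exp (- a) / 2) \<le> (\<Sum>i\<in>I. logistic_weight (a * u i))"
proof -
  have "(\<Sum>i\<in>I. exp (- a) / 2 * (1 - a * ((u i)\<^sup>2 - 1) / 2)) \<le> (\<Sum>i\<in>I. logistic_weight (a * u i))"
    using logistic_weight_ge_quadratic[OF assms(1)] by (rule sum_mono)
  moreover have "(\<Sum>i\<in>I. exp (- a) / 2 * (1 - a * ((u i)\<^sup>2 - 1) / 2)) = card I * (exp (- a) / 2)"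
    using assms(2)
    by (simp add: algebra_simps sum_subtractf sum.distrib flip: sum_distrib_left sum_divide_distrib)
  ultimately show ?thesis
    by simp
qed

(* The weights 1 - u i * m integrate every affine function c - s u to card I * c * (1 - m^2),
   and the line of logistic_weight_line_mult_le (with b = - m), which passes through
   (1 / m, logistic_weight (a / m)), lies below logistic_weight (a u) exactly where these
   weights are positive. *)
lemma logistic_weight_centered_sum_ge_neg_mean:
  fixes I :: "'a set" and u :: "'a \<Rightarrow> real" and a m :: real
  defines "m \<equiv> (\<Sum>i\<in>I. u i) / card I"
  assumes "0 < a" and norm: "(\<Sum>i\<in>I. (u i)\<^sup>2) = card I" and "exp (- a) / 3 \<le> - m"
  shows "card I * (exp (- a) / 8) * (1 - m\<^sup>2) \<le> (\<Sum>i\<in>I. logistic_weight (a * u i) * (1 - u i * m))"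
proof -
  define c where "c = exp (- a) / 8"
  define s where "s = - m * (logistic_weight (- a / - m) - c)"
  have "(c - s * u i) * (1 + - m * u i) \<le> logistic_weight (a * u i) * (1 + - m * u i)" for i
    unfolding c_def s_def using \<open>0 < a\<close> \<open>exp (- a) / 3 \<le> - m\<close> by (rule logistic_weight_line_mult_le)
  then have "(\<Sum>i\<in>I. (c - s * u i) * (1 - u i * m)) \<le> (\<Sum>i\<in>I. logistic_weight (a * u i) * (1 - u i * m))"
    by (intro sum_mono) (simp add: mult.commute)
  moreover have "(\<Sum>i\<in>I. (c - s * u i) * (1 - u i * m)) = card I * c * (1 - m\<^sup>2)"
    unfolding m_def using norm by (rule sum_affine_mult_centered)
  ultimately show ?thesis
    by (simp add: c_def)
qed

lemma logistic_weight_centered_sum_ge_small_neg_mean: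
  fixes I :: "'a set" and u :: "'a \<Rightarrow> real" and a m :: real
  defines "m \<equiv> (\<Sum>i\<in>I. u i) / card I"
  assumes "0 < a" and norm: "(\<Sum>i\<in>I. (u i)\<^sup>2) = card I" and "m < 0" and "- m < exp (- a) / 3"
  shows "card I * (exp (- a) / 8) * (1 - m\<^sup>2) \<le> (\<Sum>i\<in>I. logistic_weight (a * u i) * (1 - u i * m))"
proof -
  have "0 \<le> exp (- a) * m\<^sup>2"
    by simp
  then have "exp (- a) / 8 * (1 - m\<^sup>2) \<le> exp (- a) / 2 - (- m)"
    using \<open>m < 0\<close> \<open>- m < exp (- a) / 3\<close> unfolding right_diff_distrib by linarith
  then have "card I * (exp (- a) / 8 * (1 - m\<^sup>2)) \<le> card I * (exp (- a) / 2 - (- m))"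
    by (rule mult_left_mono) simp
  also have "\<dots> = card I * (exp (- a) / 2) - (- m) * card I"
    by (simp add: algebra_simps)
  also have "\<dots> \<le> (\<Sum>i\<in>I. logistic_weight (a * u i)) - (- m) * card I"
    using logistic_weight_sum_ge[OF \<open>0 < a\<close> norm] by simp
  also have "\<dots> \<le> (\<Sum>i\<in>I. logistic_weight (a * u i) * (1 + (- m) * u i))"
    using norm \<open>m < 0\<close>
    by (intro sum_mult_affine_ge) (simp_all add: less_imp_le[OF logistic_weight_pos] logistic_weight_le_1)
  finally show ?thesis
    by (simp add: algebra_simps)
qed

lemma logistic_weight_centered_sum_ge:
  fixes I :: "'a set" and u :: "'a \<Rightarrow> real" and a m :: real
  defines "m \<equiv> (\<Sum>i\<in>I. u i) / card I"
  assumes "0 < a" and norm: "(\<Sum>i\<in>I. (u i)\<^sup>2) = card I"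
  shows "card I * (exp (- a) / 8) * (1 - m\<^sup>2) \<le> (\<Sum>i\<in>I. logistic_weight (a * u i) * (1 - u i * m))"
proof -
  consider "0 \<le> m" | "m < 0" "- m < exp (- a) / 3" | "exp (- a) / 3 \<le> - m"
    by linarith
  then show ?thesis
  proof cases
    case 1
    have "card I * (exp (- a) / 8) \<le> card I * (exp (- a) / 2)"
      by (intro mult_left_mono) simp_all
    also have "\<dots> \<le> (\<Sum>i\<in>I. logistic_weight (a * u i))"
      using \<open>0 < a\<close> norm by (rule logistic_weight_sum_ge)
    finally have "card I * (exp (- a) / 8) * (1 - m\<^sup>2) \<le> (\<Sum>i\<in>I. logistic_weight (a * u i)) * (1 - m\<^sup>2)"
      using mean_sq_le_1[OF norm] by (intro mult_right_mono) (simp_all add: m_def)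
    also have "\<dots> \<le> (\<Sum>i\<in>I. logistic_weight (a * u i) * (1 - u i * m))"
      unfolding m_def
      using 1 logistic_weight_opposite \<open>0 < a\<close> by (intro sum_centered_ge_Chebyshev) (simp_all add: m_def)
    finally show ?thesis .
  next
    case 2
    then show ?thesis
      unfolding m_def using \<open>0 < a\<close> norm by (intro logistic_weight_centered_sum_ge_small_neg_mean)
  next
    case 3
    then show ?thesis
      unfolding m_def using \<open>0 < a\<close> norm by (intro logistic_weight_centered_sum_ge_neg_mean)
  qed
qed

lemma logistic_weight_centered_sum_nonneg:
  fixes I :: "'a set" and u :: "'a \<Rightarrow> real" and a m :: real
  defines "m \<equiv> (\<Sum>i\<in>I. u i) / card I"
  assumes norm: "(\<Sum>i\<in>I. (u i)\<^sup>2) = card I"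
  shows "0 \<le> (\<Sum>i\<in>I. logistic_weight (a * u i) * (1 - u i * m))"
proof -
  have "m\<^sup>2 \<le> 1"
    unfolding m_def using norm by (rule mean_sq_le_1)
  consider "0 < a" | "a = 0" | "a < 0"
    by linarith
  then show ?thesis
  proof cases
    case 1
    have "0 \<le> card I * (exp (- a) / 8) * (1 - m\<^sup>2)"
      using \<open>m\<^sup>2 \<le> 1\<close> by simp
    also have "\<dots> \<le> (\<Sum>i\<in>I. logistic_weight (a * u i) * (1 - u i * m))"
      unfolding m_def using 1 norm by (rule logistic_weight_centered_sum_ge)
    finally show ?thesis .
  next
    case 2
    have "(\<Sum>i\<in>I. (1 / 2 - 0 * u i) * (1 - u i * m)) = card I * (1 / 2) * (1 - m\<^sup>2)"
      unfolding m_def using norm by (rule sum_affine_mult_centered)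
    moreover have "0 \<le> card I * (1 / 2) * (1 - m\<^sup>2)"
      using \<open>m\<^sup>2 \<le> 1\<close> by simp
    ultimately show ?thesis
      using 2 by (simp add: logistic_weight_0)
  next
    case 3
    have "0 \<le> card I * (exp (- (- a)) / 8) * (1 - m\<^sup>2)"
      using \<open>m\<^sup>2 \<le> 1\<close> by simp
    also have "\<dots> \<le> (\<Sum>i\<in>I. logistic_weight (- a * - u i) * (1 - - u i * ((\<Sum>i\<in>I. - u i) / card I)))"
      using logistic_weight_centered_sum_ge[where a = "- a" and u = "\<lambda>i. - u i"] 3 norm
      by (simp add: m_def sum_negf)
    finally show ?thesis
      by (simp add: m_def sum_negf)
  qed
qed

section \<open>The scale-invariant risk and its gradient\<close>

definition second_moment :: "('n::finite \<Rightarrow> 'a::real_inner) \<Rightarrow> 'a \<Rightarrow> real" where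
  "second_moment z w = (\<Sum>i\<in>UNIV. (z i \<bullet> w)\<^sup>2) / CARD('n)"

definition normalized_margin :: "('n::finite \<Rightarrow> 'a::real_inner) \<Rightarrow> 'a \<Rightarrow> 'n \<Rightarrow> real" where
  "normalized_margin z w i = z i \<bullet> w / sqrt (second_moment z w)"

definition normalized_risk :: "('n::finite \<Rightarrow> 'a::real_inner) \<Rightarrow> 'a \<Rightarrow> real \<Rightarrow> real" where
  "normalized_risk z w \<alpha> = (\<Sum>i\<in>UNIV. ell_log (\<alpha> * normalized_margin z w i)) / CARD('n)"

definition normalized_risk_grad :: "('n::finite \<Rightarrow> 'a::real_inner) \<Rightarrow> 'a \<Rightarrow> real \<Rightarrow> 'a" where
  "normalized_risk_grad z w \<alpha> =
    - (\<alpha> / (CARD('n) * sqrt (second_moment z w))) *\<^sub>R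
      (\<Sum>j\<in>UNIV. (logistic_weight (\<alpha> * normalized_margin z w j)
          - (\<Sum>i\<in>UNIV. logistic_weight (\<alpha> * normalized_margin z w i) * normalized_margin z w i)
            * normalized_margin z w j / CARD('n)) *\<^sub>R z j)"

lemma second_moment_pos:
  fixes z :: "'n::finite \<Rightarrow> 'a::real_inner"
  assumes "w \<in> span (range z)" and "w \<noteq> 0"
  shows "0 < second_moment z w"
proof (rule ccontr)
  assume "\<not> 0 < second_moment z w"
  then have "(\<Sum>i\<in>UNIV. (z i \<bullet> w)\<^sup>2) \<le> 0"
    by (simp add: second_moment_def zero_less_divide_iff)
  then have "(\<Sum>i\<in>UNIV. (z i \<bullet> w)\<^sup>2) = 0"
    by (simp add: order.antisym sum_nonneg)
  then have "orthogonal w v" if "v \<in> range z" for v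
    using that by (auto simp: sum_nonneg_eq_0_iff orthogonal_def inner_commute)
  then have "orthogonal w w"
    using orthogonal_to_span[OF assms(1)] by blast
  with assms(2) show False
    by (simp add: orthogonal_def)
qed

lemma sum_normalized_margin_sq:
  fixes z :: "'n::finite \<Rightarrow> 'a::real_inner"
  assumes "0 < second_moment z w"
  shows "(\<Sum>i\<in>UNIV. (normalized_margin z w i)\<^sup>2) = CARD('n)"
  using assms
  by (simp add: normalized_margin_def power_divide second_moment_def field_simps
      flip: sum_divide_distrib sum_distrib_left)

lemma has_derivative_second_moment:
  fixes z :: "'n::finite \<Rightarrow> 'a::real_inner"
  shows "(second_moment z has_derivative (\<lambda>h. 2 * (\<Sum>j\<in>UNIV. (z j \<bullet> w) * (z j \<bullet> h)) / CARD('n))) (at w)"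
  unfolding second_moment_def[abs_def]
  by (auto intro!: derivative_eq_intros ext simp: mult.commute mult.left_commute
      simp flip: sum_distrib_left sum_divide_distrib)

lemma has_derivative_normalized_margin:
  fixes z :: "'n::finite \<Rightarrow> 'a::real_inner"
  assumes "0 < second_moment z w"
  shows "((\<lambda>v. normalized_margin z v i) has_derivative
    (\<lambda>h. (z i \<bullet> h - normalized_margin z w i * (\<Sum>j\<in>UNIV. normalized_margin z w j * (z j \<bullet> h)) / CARD('n))
      / sqrt (second_moment z w))) (at w)"
proof -
  define s where "s = sqrt (second_moment z w)"
  define D where "D h = 2 * (\<Sum>j\<in>UNIV. (z j \<bullet> w) * (z j \<bullet> h)) / CARD('n) * (inverse s / 2)" for h
  have "0 < s"
    using assms by (simp add: s_def)
  have "((\<lambda>v. sqrt (second_moment z v)) has_derivative D) (at w)"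
    unfolding s_def D_def
    by (rule DERIV_compose_FDERIV[OF DERIV_real_sqrt[OF assms] has_derivative_second_moment])
  from has_derivative_divide'[OF has_derivative_inner_right[OF has_derivative_ident] this]
  have "((\<lambda>v. z i \<bullet> v / sqrt (second_moment z v)) has_derivative
      (\<lambda>h. ((z i \<bullet> h) * s - (z i \<bullet> w) * D h) / (s * s))) (at w)"
    using \<open>0 < s\<close> by (simp add: s_def)
  moreover have "((z i \<bullet> h) * s - (z i \<bullet> w) * D h) / (s * s)
      = (z i \<bullet> h - normalized_margin z w i * (\<Sum>j\<in>UNIV. normalized_margin z w j * (z j \<bullet> h)) / CARD('n)) / s"
    for h
    using \<open>0 < s\<close>
    by (simp add: D_def normalized_margin_def s_def[symmetric] field_simps sum_divide_distrib
        sum_distrib_left)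
  ultimately show ?thesis
    unfolding normalized_margin_def[abs_def] s_def by simp
qed

lemma normalized_risk_grad_inner:
  fixes z :: "'n::finite \<Rightarrow> 'a::real_inner" and w h :: 'a and \<alpha> :: real
  defines "u \<equiv> normalized_margin z w"
  defines "\<sigma> \<equiv> \<lambda>i. logistic_weight (\<alpha> * u i)"
  shows "normalized_risk_grad z w \<alpha> \<bullet> h = - (\<alpha> / (CARD('n) * sqrt (second_moment z w))) *
    ((\<Sum>i\<in>UNIV. \<sigma> i * (z i \<bullet> h)) - (\<Sum>i\<in>UNIV. \<sigma> i * u i) * (\<Sum>j\<in>UNIV. u j * (z j \<bullet> h)) / CARD('n))"
proof -
  define P where "P = (\<Sum>i\<in>UNIV. \<sigma> i * u i)"
  have "normalized_risk_grad z w \<alpha> \<bullet> h = - (\<alpha> / (CARD('n) * sqrt (second_moment z w))) *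
      (\<Sum>j\<in>UNIV. \<sigma> j * (z j \<bullet> h) - P / CARD('n) * (u j * (z j \<bullet> h)))"
    unfolding normalized_risk_grad_def inner_scaleR_left inner_sum_left
    by (simp add: u_def[symmetric] \<sigma>_def P_def algebra_simps)
  then show ?thesis
    unfolding P_def[symmetric] by (simp add: sum_subtractf flip: sum_distrib_left sum_divide_distrib)
qed

lemma has_derivative_normalized_risk:
  fixes z :: "'n::finite \<Rightarrow> 'a::real_inner"
  assumes "0 < second_moment z w"
  shows "((\<lambda>v. normalized_risk z v \<alpha>) has_derivative (\<lambda>h. normalized_risk_grad z w \<alpha> \<bullet> h)) (at w)"
proof -
  define N where "N = real CARD('n)"
  define s where "s = sqrt (second_moment z w)"
  define u where "u = normalized_margin z w"
  define \<sigma> where "\<sigma> i = logistic_weight (\<alpha> * u i)" for i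
  define Q where "Q h = (\<Sum>j\<in>UNIV. u j * (z j \<bullet> h))" for h
  have "0 < s" "0 < N"
    using assms by (simp_all add: s_def N_def)
  have "((\<lambda>v. ell_log (\<alpha> * normalized_margin z v i)) has_derivative
      (\<lambda>h. \<alpha> * ((z i \<bullet> h - u i * Q h / N) / s) * - \<sigma> i)) (at w)" for i
    unfolding \<sigma>_def u_def Q_def N_def s_def
    by (intro DERIV_compose_FDERIV[OF DERIV_ell_log] has_derivative_mult_right
        has_derivative_normalized_margin assms)
  then have "((\<lambda>v. normalized_risk z v \<alpha>) has_derivative
      (\<lambda>h. (\<Sum>i\<in>UNIV. \<alpha> * ((z i \<bullet> h - u i * Q h / N) / s) * - \<sigma> i) / N)) (at w)"
    unfolding normalized_risk_def[abs_def] N_def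
    by (intro bounded_linear.has_derivative[OF bounded_linear_divide] has_derivative_sum)
  moreover have "(\<Sum>i\<in>UNIV. \<alpha> * ((z i \<bullet> h - u i * Q h / N) / s) * - \<sigma> i) / N
      = normalized_risk_grad z w \<alpha> \<bullet> h" for h
  proof -
    have "(\<Sum>i\<in>UNIV. \<alpha> * ((z i \<bullet> h - u i * Q h / N) / s) * - \<sigma> i)
        = (\<Sum>i\<in>UNIV. - (\<alpha> / s) * (\<sigma> i * (z i \<bullet> h)) + \<alpha> / s * (Q h / N) * (\<sigma> i * u i))"
      by (simp add: algebra_simps diff_divide_distrib)
    also have "\<dots> = - (\<alpha> / s) * (\<Sum>i\<in>UNIV. \<sigma> i * (z i \<bullet> h)) + \<alpha> / s * (Q h / N) * (\<Sum>i\<in>UNIV. \<sigma> i * u i)"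
      by (simp only: sum.distrib sum_distrib_left)
    finally show ?thesis
      using \<open>0 < s\<close> \<open>0 < N\<close>
      by (simp add: normalized_risk_grad_inner u_def[symmetric] \<sigma>_def[symmetric] Q_def[symmetric]
          s_def[symmetric] N_def[symmetric] field_simps)
  qed
  ultimately show ?thesis
    by simp
qed

lemma normalized_risk_grad_in_span: "normalized_risk_grad z w \<alpha> \<in> span (range z)"
  unfolding normalized_risk_grad_def by (intro span_scale span_sum span_base) auto

lemma inner_normalized_risk_grad_self:
  fixes z :: "'n::finite \<Rightarrow> 'a::real_inner"
  assumes "0 < second_moment z w"
  shows "w \<bullet> normalized_risk_grad z w \<alpha> = 0"
proof -
  define N where "N = real CARD('n)"
  define s where "s = sqrt (second_moment z w)"
  define u where "u = normalized_margin z w"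
  define \<sigma> where "\<sigma> j = logistic_weight (\<alpha> * u j)" for j
  define P where "P = (\<Sum>i\<in>UNIV. \<sigma> i * u i)"
  have "0 < s"
    using assms by (simp add: s_def)
  then have "w \<bullet> z j = s * u j" for j
    by (simp add: u_def normalized_margin_def s_def inner_commute)
  then have "w \<bullet> normalized_risk_grad z w \<alpha>
      = - (\<alpha> / (N * s)) * (\<Sum>j\<in>UNIV. (\<sigma> j - P * u j / N) * (s * u j))"
    unfolding normalized_risk_grad_def inner_scaleR_right inner_sum_right
    by (simp add: u_def[symmetric] s_def[symmetric] \<sigma>_def[symmetric] P_def[symmetric] N_def)
  also have "(\<Sum>j\<in>UNIV. (\<sigma> j - P * u j / N) * (s * u j))
      = (\<Sum>j\<in>UNIV. s * (\<sigma> j * u j) - s * P / N * (u j)\<^sup>2)"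
    by (simp add: algebra_simps power2_eq_square)
  also have "\<dots> = s * P - s * P / N * (\<Sum>j\<in>UNIV. (u j)\<^sup>2)"
    by (simp only: sum_subtractf sum_distrib_left P_def)
  also have "\<dots> = 0"
    using sum_normalized_margin_sq[OF assms] by (simp add: u_def N_def)
  finally show ?thesis
    by simp
qed

lemma inner_normalized_risk_grad_active:
  fixes z :: "'n::finite \<Rightarrow> 'a::real_inner" and v w :: 'a
  assumes "\<And>j. z j \<bullet> v = 1"
  defines "u \<equiv> normalized_margin z w"
  defines "m \<equiv> (\<Sum>j\<in>UNIV. u j) / CARD('n)"
  shows "- (v \<bullet> normalized_risk_grad z w \<alpha>)
    = \<alpha> / (CARD('n) * sqrt (second_moment z w)) * (\<Sum>i\<in>UNIV. logistic_weight (\<alpha> * u i) * (1 - u i * m))"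
proof -
  define N where "N = real CARD('n)"
  define \<sigma> where "\<sigma> j = logistic_weight (\<alpha> * u j)" for j
  define P where "P = (\<Sum>i\<in>UNIV. \<sigma> i * u i)"
  have "v \<bullet> z j = 1" for j
    using assms(1) by (simp add: inner_commute)
  then have "v \<bullet> normalized_risk_grad z w \<alpha>
      = - (\<alpha> / (N * sqrt (second_moment z w))) * (\<Sum>j\<in>UNIV. \<sigma> j - P * u j / N)"
    unfolding normalized_risk_grad_def inner_scaleR_right inner_sum_right
    by (simp add: u_def[symmetric] \<sigma>_def[symmetric] P_def[symmetric] N_def)
  moreover have "(\<Sum>j\<in>UNIV. \<sigma> j - P * u j / N) = (\<Sum>i\<in>UNIV. \<sigma> i) - P * m"
    by (simp add: m_def N_def sum_subtractf sum_distrib_left sum_divide_distrib)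
  moreover have "(\<Sum>i\<in>UNIV. \<sigma> i * (1 - u i * m)) = (\<Sum>i\<in>UNIV. \<sigma> i) - P * m"
    unfolding P_def by (simp add: right_diff_distrib sum_subtractf sum_distrib_right mult.assoc)
  ultimately show ?thesis
    by (simp add: \<sigma>_def N_def)
qed

lemma neg_inner_normalized_risk_grad_active_nonneg:
  fixes z :: "'n::finite \<Rightarrow> 'a::real_inner"
  assumes "0 < second_moment z w" and "\<And>j. z j \<bullet> v = 1"
  shows "0 \<le> - \<alpha> * (v \<bullet> normalized_risk_grad z w \<alpha>)"
proof -
  define u where "u = normalized_margin z w"
  define F where "F = (\<Sum>i\<in>UNIV. logistic_weight (\<alpha> * u i) * (1 - u i * ((\<Sum>j\<in>UNIV. u j) / CARD('n))))"
  have "0 \<le> F"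
    unfolding F_def u_def using sum_normalized_margin_sq[OF assms(1)]
    by (intro logistic_weight_centered_sum_nonneg) simp
  have eq: "- (v \<bullet> normalized_risk_grad z w \<alpha>) = \<alpha> / (CARD('n) * sqrt (second_moment z w)) * F"
    unfolding F_def u_def by (rule inner_normalized_risk_grad_active[OF assms(2)])
  have "- \<alpha> * (v \<bullet> normalized_risk_grad z w \<alpha>) = \<alpha> * - (v \<bullet> normalized_risk_grad z w \<alpha>)"
    by simp
  also have "\<dots> = \<alpha>\<^sup>2 / (CARD('n) * sqrt (second_moment z w)) * F"
    unfolding eq by (simp add: power2_eq_square)
  finally show ?thesis
    using \<open>0 \<le> F\<close> assms(1) by simp
qed

lemma neg_inner_normalized_risk_grad_active_ge:
  fixes z :: "'n::finite \<Rightarrow> 'a::real_inner" and v w :: 'a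
  defines "u \<equiv> normalized_margin z w"
  defines "m \<equiv> (\<Sum>j\<in>UNIV. u j) / CARD('n)"
  assumes "0 < second_moment z w" and "\<And>j. z j \<bullet> v = 1" and "0 < \<alpha>"
  shows "\<alpha> * exp (- \<alpha>) / (8 * sqrt (second_moment z w)) * (1 - m\<^sup>2) \<le> - (v \<bullet> normalized_risk_grad z w \<alpha>)"
proof -
  define c where "c = \<alpha> / (CARD('n) * sqrt (second_moment z w))"
  have "0 < c"
    using assms(3,5) by (simp add: c_def)
  have "CARD('n) * (exp (- \<alpha>) / 8) * (1 - m\<^sup>2)
      \<le> (\<Sum>i\<in>UNIV. logistic_weight (\<alpha> * u i) * (1 - u i * m))"
    unfolding m_def u_def using \<open>0 < \<alpha>\<close> sum_normalized_margin_sq[OF assms(3)]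
    by (intro logistic_weight_centered_sum_ge) simp_all
  moreover have "- (v \<bullet> normalized_risk_grad z w \<alpha>)
      = c * (\<Sum>i\<in>UNIV. logistic_weight (\<alpha> * u i) * (1 - u i * m))"
    unfolding c_def u_def m_def by (rule inner_normalized_risk_grad_active[OF assms(4)])
  ultimately have "c * (CARD('n) * (exp (- \<alpha>) / 8) * (1 - m\<^sup>2))
      \<le> - (v \<bullet> normalized_risk_grad z w \<alpha>)"
    using \<open>0 < c\<close> by (simp add: mult_left_mono)
  moreover have "c * (CARD('n) * (exp (- \<alpha>) / 8) * (1 - m\<^sup>2))
      = \<alpha> * exp (- \<alpha>) / (8 * sqrt (second_moment z w)) * (1 - m\<^sup>2)"
    by (simp add: c_def)
  ultimately show ?thesis
    by simp
qed

section \<open>Gradient descent on labeled data\<close>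

lemma labeled_matrix_component:
  "(a v* labeled_matrix x y) $ i = (y i *\<^sub>R x i) \<bullet> a"
  unfolding vector_matrix_mult_def labeled_matrix_def data_matrix_def matrix_matrix_mult_def inner_vec_def
  by (simp add: if_distrib[of "\<lambda>z. _ * z"] sum_distrib_left algebra_simps cong: if_cong)

lemma signorm_eq_sqrt_second_moment:
  fixes x :: "'n::finite \<Rightarrow> real^'d::finite"
  shows "signorm x y w = sqrt (second_moment (\<lambda>i. y i *\<^sub>R x i) w)"
proof -
  have "w \<bullet> (Sigma_mat x y *v w) = (w v* labeled_matrix x y) \<bullet> (w v* labeled_matrix x y) / CARD('n)"
    unfolding Sigma_mat_def
    by (simp flip: scaleR_matrix_vector_assoc matrix_vector_mul_assoc dot_lmul_matrix)
  then show ?thesis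
    by (simp add: signorm_def second_moment_def inner_vec_def labeled_matrix_component power2_eq_square)
qed

lemma risk_eq_normalized_risk:
  fixes x :: "'n::finite \<Rightarrow> real^'d::finite"
  shows "risk x y w \<alpha> = normalized_risk (\<lambda>i. y i *\<^sub>R x i) w \<alpha>"
proof -
  have "\<alpha> * y i * (x i \<bullet> w) / signorm x y w = \<alpha> * normalized_margin (\<lambda>i. y i *\<^sub>R x i) w i" for i
    by (simp only: normalized_margin_def signorm_eq_sqrt_second_moment inner_scaleR_left mult.assoc
        times_divide_eq_right)
  then show ?thesis
    by (simp add: risk_def normalized_risk_def)
qed

lemma grad_w_eq_normalized_risk_grad:
  fixes x :: "'n::finite \<Rightarrow> real^'d::finite"
  assumes "0 < second_moment (\<lambda>i. y i *\<^sub>R x i) w"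
  shows "grad_w x y w \<alpha> = normalized_risk_grad (\<lambda>i. y i *\<^sub>R x i) w \<alpha>"
proof -
  have deriv: "((\<lambda>v. risk x y v \<alpha>) has_derivative
      (\<lambda>h. normalized_risk_grad (\<lambda>i. y i *\<^sub>R x i) w \<alpha> \<bullet> h)) (at w)"
    unfolding risk_eq_normalized_risk using assms by (rule has_derivative_normalized_risk)
  show ?thesis
    unfolding grad_w_def
  proof (rule the_equality)
    fix g
    assume "((\<lambda>v. risk x y v \<alpha>) has_derivative (\<lambda>h. g \<bullet> h)) (at w)"
    then have "(\<lambda>h. g \<bullet> h) = (\<lambda>h. normalized_risk_grad (\<lambda>i. y i *\<^sub>R x i) w \<alpha> \<bullet> h)"
      using deriv by (rule has_derivative_unique)
    then show "g = normalized_risk_grad (\<lambda>i. y i *\<^sub>R x i) w \<alpha>"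
      by (metis vector_eq_rdot)
  qed (rule deriv)
qed

lemma span_range_scaleR_nonzero:
  assumes "\<And>i. c i \<noteq> 0"
  shows "span (range (\<lambda>i. c i *\<^sub>R x i)) = span (range x)"
proof -
  have "c i *\<^sub>R x i \<in> span (range x)" for i
    by (intro span_scale span_base) simp
  moreover have "x i \<in> span (range (\<lambda>i. c i *\<^sub>R x i))" for i
  proof -
    have "(1 / c i) *\<^sub>R (c i *\<^sub>R x i) \<in> span (range (\<lambda>i. c i *\<^sub>R x i))"
      by (intro span_scale span_base) simp
    then show ?thesis
      using assms[of i] by simp
  qed
  ultimately show ?thesis
    unfolding span_eq by blast
qed

lemma span_labeled_samples:
  assumes "\<forall>i. y i = 1 \<or> y i = -1"
  shows "span (range (\<lambda>i. y i *\<^sub>R x i)) = span (range x)"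
proof (rule span_range_scaleR_nonzero)
  show "y i \<noteq> 0" for i
    using assms[rule_format, of i] by auto
qed

lemma gradient_descent_in_span:
  fixes x :: "'n::finite \<Rightarrow> real^'d::finite" and w :: "nat \<Rightarrow> real^'d"
  assumes labels: "\<forall>i. y i = 1 \<or> y i = -1"
    and init: "w 0 \<in> span (range x) - {0}"
    and gd_w: "\<forall>k. w (Suc k) = w k - \<eta> *\<^sub>R grad_w x y (w k) (\<alpha> k)"
  shows "w k \<in> span (range x) - {0}"
proof (induction k)
  case 0
  show ?case
    using init .
next
  case (Suc k)
  define z where "z = (\<lambda>i. y i *\<^sub>R x i)"
  define G where "G = normalized_risk_grad z (w k) (\<alpha> k)"
  have span: "span (range z) = span (range x)"
    unfolding z_def using labels by (rule span_labeled_samples)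
  then have M: "0 < second_moment z (w k)"
    using Suc by (intro second_moment_pos) auto
  have step: "w (Suc k) = w k - \<eta> *\<^sub>R G"
    using gd_w grad_w_eq_normalized_risk_grad[OF M[unfolded z_def]] by (simp add: G_def z_def)
  have "G \<bullet> w k = 0"
    using inner_normalized_risk_grad_self[OF M] by (simp add: G_def inner_commute)
  then have "w (Suc k) \<bullet> w k = w k \<bullet> w k"
    by (simp add: step inner_diff_left)
  moreover have "G \<in> span (range x)"
    unfolding G_def span[symmetric] by (rule normalized_risk_grad_in_span)
  then have "w (Suc k) \<in> span (range x)"
    unfolding step using Suc by (intro span_diff span_scale) auto
  ultimately show ?case
    using Suc by auto
qed

lemma svm_solution_in_span:
  fixes x :: "'n::finite \<Rightarrow> real^'d::finite"
  assumes "is_svm_solution x y wh"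
  shows "wh \<in> span (range x)"
proof -
  obtain p q where p: "p \<in> span (range x)" and q: "\<And>v. v \<in> span (range x) \<Longrightarrow> orthogonal q v"
    and wh: "wh = p + q"
    using orthogonal_subspace_decomp_exists[of "range x" wh] by blast
  have "x i \<bullet> q = 0" for i
    using q[of "x i"] by (simp add: orthogonal_def inner_commute span_base)
  then have "x i \<bullet> p = x i \<bullet> wh" for i
    by (simp add: wh inner_add_right)
  then have "norm wh \<le> norm p"
    using assms unfolding is_svm_solution_def by simp
  moreover have "(norm wh)\<^sup>2 = (norm p)\<^sup>2 + (norm q)\<^sup>2"
    using q[OF p] unfolding wh orthogonal_def
    by (simp add: power2_norm_eq_inner inner_add_left inner_add_right inner_commute)
  ultimately have "(norm q)\<^sup>2 \<le> 0"
    using power_mono[OF \<open>norm wh \<le> norm p\<close> norm_ge_zero, of 2] by linarith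
  then have "q = 0"
    by simp
  with p wh show ?thesis
    by simp
qed

lemma rho_perp_le_norm_diff:
  fixes wh W :: "real^'d::finite"
  assumes "W \<noteq> 0"
  shows "rho_perp wh W \<le> norm (wh - c *\<^sub>R W)"
proof -
  define c\<^sub>0 where "c\<^sub>0 = rho wh W / norm W"
  define r where "r = wh - c\<^sub>0 *\<^sub>R W"
  have "r \<bullet> W = wh \<bullet> W - (wh \<bullet> W) / (norm W)\<^sup>2 * (W \<bullet> W)"
    by (simp add: r_def c\<^sub>0_def rho_def inner_diff_left power2_eq_square)
  also have "\<dots> = 0"
    using assms by (simp add: power2_norm_eq_inner)
  finally have "orthogonal r ((c\<^sub>0 - c) *\<^sub>R W)"
    by (simp add: orthogonal_def)
  moreover have "wh - c *\<^sub>R W = r + (c\<^sub>0 - c) *\<^sub>R W"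
    by (simp add: r_def algebra_simps)
  ultimately have "(norm (wh - c *\<^sub>R W))\<^sup>2 = (norm r)\<^sup>2 + (norm ((c\<^sub>0 - c) *\<^sub>R W))\<^sup>2"
    by (simp only: norm_add_Pythagorean)
  then have "(norm r)\<^sup>2 \<le> (norm (wh - c *\<^sub>R W))\<^sup>2"
    using zero_le_power2[of "norm ((c\<^sub>0 - c) *\<^sub>R W)"] by linarith
  then have "norm r \<le> norm (wh - c *\<^sub>R W)"
    using norm_ge_zero by (rule power2_le_imp_le)
  then show ?thesis
    by (simp add: rho_perp_def r_def c\<^sub>0_def)
qed

lemma lambda_min_nonneg:
  fixes x :: "'n::finite \<Rightarrow> real^'d::finite"
  assumes "v \<in> span (range x)" and "v \<noteq> 0"
  shows "0 \<le> lambda_min x y"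
  unfolding lambda_min_def by (rule cInf_greatest) (use assms in auto)

lemma lambda_min_mult_norm_sq_le:
  fixes x :: "'n::finite \<Rightarrow> real^'d::finite"
  assumes "v \<in> span (range x)"
  shows "lambda_min x y * (norm v)\<^sup>2 \<le> (signorm x y v)\<^sup>2"
proof (cases "v = 0")
  case False
  have "lambda_min x y \<le> (signorm x y v)\<^sup>2 / (norm v)\<^sup>2"
    unfolding lambda_min_def
    by (rule cInf_lower) (use assms False in \<open>auto intro!: bdd_belowI[where m = 0]\<close>)
  with False show ?thesis
    by (simp add: pos_le_divide_eq)
qed (simp add: signorm_def)

lemma lambda_min_rho_perp_sq_le:
  fixes x :: "'n::finite \<Rightarrow> real^'d::finite" and y :: "'n \<Rightarrow> real" and W wh :: "real^'d"
    and m :: real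
  defines "z \<equiv> \<lambda>i. y i *\<^sub>R x i"
  defines "u \<equiv> normalized_margin z W"
  defines "m \<equiv> (\<Sum>i\<in>UNIV. u i) / CARD('n)"
  assumes W: "W \<in> span (range x)" "W \<noteq> 0" and "0 < second_moment z W"
    and wh: "wh \<in> span (range x)" "\<And>i. z i \<bullet> wh = 1"
  shows "lambda_min x y * (rho_perp wh W)\<^sup>2 \<le> 1 - m\<^sup>2"
proof -
  define s where "s = sqrt (second_moment z W)"
  define v where "v = wh - (m / s) *\<^sub>R W"
  have "0 < s"
    using \<open>0 < second_moment z W\<close> by (simp add: s_def)
  then have "z i \<bullet> v = 1 - u i * m" for i
    using wh(2) by (simp add: v_def u_def s_def normalized_margin_def inner_diff_right)
  then have "(signorm x y v)\<^sup>2 = (\<Sum>i\<in>UNIV. (1 - m * u i) * (1 - u i * m)) / CARD('n)"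
    by (simp add: signorm_eq_sqrt_second_moment second_moment_def sum_nonneg z_def[symmetric]
        power2_eq_square mult.commute)
  also have "\<dots> = 1 - m\<^sup>2"
    using sum_affine_mult_centered[where I = UNIV and u = u and c = 1 and s = m]
      sum_normalized_margin_sq[OF \<open>0 < second_moment z W\<close>]
    by (simp add: m_def u_def)
  finally have sig: "(signorm x y v)\<^sup>2 = 1 - m\<^sup>2" .
  have "(rho_perp wh W)\<^sup>2 \<le> (norm v)\<^sup>2"
    using rho_perp_le_norm_diff[OF W(2)] by (simp add: v_def power_mono rho_perp_def)
  then have "lambda_min x y * (rho_perp wh W)\<^sup>2 \<le> lambda_min x y * (norm v)\<^sup>2"
    using lambda_min_nonneg[OF W] by (rule mult_left_mono)
  also have "\<dots> \<le> 1 - m\<^sup>2"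
    unfolding sig[symmetric] v_def using W wh(1)
    by (intro lambda_min_mult_norm_sq_le span_diff span_scale)
  finally show ?thesis .
qed

lemma neg_inner_normalized_risk_grad_svm_ge:
  fixes x :: "'n::finite \<Rightarrow> real^'d::finite" and y :: "'n \<Rightarrow> real" and W wh :: "real^'d"
  defines "z \<equiv> \<lambda>i. y i *\<^sub>R x i"
  assumes W: "W \<in> span (range x)" "W \<noteq> 0" and M: "0 < second_moment z W"
    and wh: "wh \<in> span (range x)" "\<And>i. z i \<bullet> wh = 1" and "0 < \<alpha>"
  shows "lambda_min x y / 8 * (\<alpha> * exp (- \<alpha>) / signorm x y W) * (rho_perp wh W)\<^sup>2
    \<le> - (wh \<bullet> normalized_risk_grad z W \<alpha>)"
proof -
  define m where "m = (\<Sum>i\<in>UNIV. normalized_margin z W i) / CARD('n)"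
  define c where "c = \<alpha> * exp (- \<alpha>) / (8 * sqrt (second_moment z W))"
  have "lambda_min x y * (rho_perp wh W)\<^sup>2 \<le> 1 - m\<^sup>2"
    using W M wh unfolding m_def z_def by (intro lambda_min_rho_perp_sq_le)
  then have "c * (lambda_min x y * (rho_perp wh W)\<^sup>2) \<le> c * (1 - m\<^sup>2)"
    using \<open>0 < \<alpha>\<close> M by (intro mult_left_mono) (simp_all add: c_def)
  also have "\<dots> \<le> - (wh \<bullet> normalized_risk_grad z W \<alpha>)"
    unfolding c_def m_def using M wh(2) \<open>0 < \<alpha>\<close> by (rule neg_inner_normalized_risk_grad_active_ge)
  finally show ?thesis
    by (simp add: c_def signorm_eq_sqrt_second_moment z_def[symmetric] field_simps)
qed

theorem lemma5p4:
  fixes x :: "'n::finite \<Rightarrow> real^'d::finite" and y :: "'n \<Rightarrow> real"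
    and w :: "nat \<Rightarrow> real^'d" and \<alpha> :: "nat \<Rightarrow> real"
    and \<eta> \<eta>\<^sub>\<alpha> :: real and wh :: "real^'d" and t :: nat
  assumes labels: "\<forall>i. y i = 1 \<or> y i = -1"
    and overparam: "CARD('n) < CARD('d)" "rank (data_matrix x) = CARD('n)"
    and separable: "\<exists>v. \<forall>i. y i * (x i \<bullet> v) > 0"
    and init: "w 0 \<in> span (range x) - {0}" "\<alpha> 0 > 0"
    and steps: "\<eta> > 0" "\<eta>\<^sub>\<alpha> > 0"
    and gd_w: "\<forall>k. w (Suc k) = w k - \<eta> *\<^sub>R grad_w x y (w k) (\<alpha> k)"
    and gd_alpha: "\<forall>k. \<alpha> (Suc k) = \<alpha> k - \<eta>\<^sub>\<alpha> * deriv_alpha x y (w k) (\<alpha> k)"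
    and svm: "is_svm_solution x y wh"
    and active: "\<forall>i. y i * (x i \<bullet> wh) = 1"
  shows "- \<alpha> t * (wh \<bullet> grad_w x y (w t) (\<alpha> t)) \<ge> 0 \<and>
         (\<alpha> t > 0 \<longrightarrow>
            - (wh \<bullet> grad_w x y (w t) (\<alpha> t)) \<ge>
              lambda_min x y / 8 * (\<alpha> t * exp (- \<alpha> t) / signorm x y (w t))
                * (rho_perp wh (w t))\<^sup>2)"
proof -
  define z where "z = (\<lambda>i. y i *\<^sub>R x i)"
  have W: "w t \<in> span (range x)" "w t \<noteq> 0"
    using gradient_descent_in_span[OF labels init(1) gd_w] by auto
  have M: "0 < second_moment z (w t)"
    using W span_labeled_samples[OF labels] unfolding z_def by (intro second_moment_pos) auto
  have margin: "z i \<bullet> wh = 1" for i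
    using active by (simp add: z_def)
  have "grad_w x y (w t) (\<alpha> t) = normalized_risk_grad z (w t) (\<alpha> t)"
    using M unfolding z_def by (rule grad_w_eq_normalized_risk_grad)
  then show ?thesis
    using neg_inner_normalized_risk_grad_active_nonneg[OF M margin]
      neg_inner_normalized_risk_grad_svm_ge[OF W M[unfolded z_def] svm_solution_in_span[OF svm]] margin
    by (simp add: z_def)
qed

end
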